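(* Let $t$ be a closed $\lambda$-term. If there is a derivation $\pi\triangleright\ \vdash^{(m,e)} t : L$ (with empty type context) in the silly multi type system, then there are an abstraction $v$ and a reduction sequence $d: t\to_{\beta_v}^* v$ with $|d|\leq m$.
   Context: $\lambda$-terms $t ::= x\mid\lambda x.t\mid tu$; values are abstractions. CbV contexts $V ::= \langle\cdot\rangle\mid tV\mid Vt$; root rule $(\lambda x.t)v\mapsto_{\beta_v} t\{x:=v\}$ for $v$ a value (capture-avoiding meta-level substitution); $\to_{\beta_v}$ is its closure under CbV contexts; $|d|$ is the length of $d$. Silly multi types: linear types $L ::= \mathtt{n} \mid M\multimap L$; multi types $M ::= [L_i]_{i\in I}$ finite multisets ($\mathbf{0}$ empty, $\uplus$ sum). Type contexts $\Gamma$ map variables to multi types with finite support; $\uplus$ pointwise; $\Gamma\setminus\!\!\setminus x$ sets $x$ to $\mathbf{0}$. Rules: (ax) $x:[L]\vdash^{(0,1)} x:L$; (many) from $(\Gamma_i\vdash^{(m_i,e_i)} t : L_i)_{i\in I}$, $I$ finite possibly empty, infer $\uplus_i\Gamma_i\vdash^{(\sum m_i,\sum e_i)} t : [L_i]_{i\in I}$; ($\mathrm{ax}_\lambda$) $\vdash^{(0,0)}\lambda x.t:\mathtt{n}$; ($\lambda$) from $\Gamma\vdash^{(m,e)}t:L$ infer $\Gamma\setminus\!\!\setminus x\vdash^{(m,e)}\lambda x.t:\Gamma(x)\multimap L$; (@) from $\Gamma\vdash^{(m,e)} t : M\multimap L$ and $\Delta\vdash^{(m',e')} u : M\uplus[\mathtt{n}]$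 infer $\Gamma\uplus\Delta\vdash^{(m+m'+1,e+e')} tu : L$. (There is also a rule for explicit substitutions, irrelevant for $\lambda$-terms.) *)

theory Defs
  imports "HOL-Library.Multiset"
begin

text \<open>Lambda-terms with de Bruijn indices (terms modulo alpha-equivalence).\<close>
datatype trm = Var nat | Abs trm | App trm trm

fun is_val :: "trm \<Rightarrow> bool" where
  "is_val (Abs _) = True"
| "is_val _ = False"

fun closed_at :: "nat \<Rightarrow> trm \<Rightarrow> bool" where
  "closed_at k (Var i) = (i < k)"
| "closed_at k (Abs t) = closed_at (Suc k) t"
| "closed_at k (App t u) = (closed_at k t \<and> closed_at k u)"

definition closed :: "trm \<Rightarrow> bool" where
  "closed t = closed_at 0 t"

fun lift :: "nat \<Rightarrow> trm \<Rightarrow> trm" where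
  "lift k (Var i) = (if i < k then Var i else Var (Suc i))"
| "lift k (Abs t) = Abs (lift (Suc k) t)"
| "lift k (App t u) = App (lift k t) (lift k u)"

text \<open>Capture-avoiding substitution t{k:=s}, removing binder k.\<close>
fun subst :: "trm \<Rightarrow> nat \<Rightarrow> trm \<Rightarrow> trm" where
  "subst (Var i) k s = (if k < i then Var (i - 1) else if i = k then s else Var i)"
| "subst (Abs t) k s = Abs (subst t (Suc k) (lift 0 s))"
| "subst (App t u) k s = App (subst t k s) (subst u k s)"

text \<open>CbV reduction: root beta_v closed under contexts V ::= <> | t V | V t (not under lambda).\<close>
inductive betav :: "trm \<Rightarrow> trm \<Rightarrow> bool" where
  root: "is_val v \<Longrightarrow> betav (App (Abs t) v) (subst t 0 v)"
| appL: "betav t t' \<Longrightarrow> betav (App t u) (App t' u)"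
| appR: "betav u u' \<Longrightarrow> betav (App t u) (App t u')"

datatype lty = N | Arr "lty multiset" lty

type_synonym ctx = "nat \<Rightarrow> lty multiset"

definition empty_ctx :: ctx where "empty_ctx = (\<lambda>_. {#})"

definition ctx_sum :: "ctx \<Rightarrow> ctx \<Rightarrow> ctx" where
  "ctx_sum \<Gamma> \<Delta> = (\<lambda>x. \<Gamma> x + \<Delta> x)"

text \<open>Linear judgement  lder \<Gamma> m e t L  (\<Gamma> \<turnstile>^(m,e) t : L) and
  multi judgement  mder \<Gamma> m e t M.  Rule (many) over a finite family is
  generated by adding one linear derivation at a time.\<close>
inductive lder :: "ctx \<Rightarrow> nat \<Rightarrow> nat \<Rightarrow> trm \<Rightarrow> lty \<Rightarrow> bool"
  and mder :: "ctx \<Rightarrow> nat \<Rightarrow> nat \<Rightarrow> trm \<Rightarrow> lty multiset \<Rightarrow> bool" where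
  ax: "lder (empty_ctx(x := {#L#})) 0 1 (Var x) L"
| ax_lam: "lder empty_ctx 0 0 (Abs t) N"
| lam: "lder \<Gamma> m e t L \<Longrightarrow> lder (\<lambda>x. \<Gamma> (Suc x)) m e (Abs t) (Arr (\<Gamma> 0) L)"
| app: "lder \<Gamma> m e t (Arr M L) \<Longrightarrow> mder \<Delta> m' e' u (M + {#N#})
        \<Longrightarrow> lder (ctx_sum \<Gamma> \<Delta>) (m + m' + 1) (e + e') (App t u) L"
| many_empty: "mder empty_ctx 0 0 t {#}"
| many_add: "lder \<Gamma> m e t L \<Longrightarrow> mder \<Delta> m' e' t M
        \<Longrightarrow> mder (ctx_sum \<Gamma> \<Delta>) (m + m') (e + e') t (add_mset L M)"

end

theory Submission
  imports Defs
begin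

text \<open>Every \<open>\<beta>\<^sub>v\<close>-step on a closed typed term strictly decreases the index m: at the
  root the application node of the redex disappears and, by the substitution lemma, the body
  absorbs only the typings of the argument that the bound variable consumes; under an argument
  position the step is replayed in each typing of the argument, of which there is at least one
  because of the silly extra \<open>[n]\<close>. Conversely a term typed in the empty context that is not a
  value has a redex, since variables are untypable in the empty context and arguments are
  always typed. Induction on m thus reaches a value within m steps.\<close>

lemma ctx_sum_eq_empty_iff [simp]:
  "ctx_sum \<Gamma> \<Delta> = empty_ctx \<longleftrightarrow> \<Gamma> = empty_ctx \<and> \<Delta> = empty_ctx"
  by (auto simp: ctx_sum_def empty_ctx_def fun_eq_iff)

lemma ctx_sum_empty_left [simp]: "ctx_sum empty_ctx \<Delta> = \<Delta>"
  and ctx_sum_empty_right [simp]: "ctx_sum \<Gamma> empty_ctx = \<Gamma>"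
  by (simp_all add: ctx_sum_def empty_ctx_def)

lemma ctx_sum_assoc: "ctx_sum (ctx_sum \<Gamma> \<Delta>) \<Theta> = ctx_sum \<Gamma> (ctx_sum \<Delta> \<Theta>)"
  by (simp add: ctx_sum_def add.assoc)

lemma ctx_sum_left_commute: "ctx_sum \<Gamma> (ctx_sum \<Delta> \<Theta>) = ctx_sum \<Delta> (ctx_sum \<Gamma> \<Theta>)"
  by (simp add: ctx_sum_def add_ac)

lemma add_mset_eq_plusE:
  assumes "add_mset x M = A + B"
  obtains A' where "A = add_mset x A'" "M = A' + B"
    | B' where "B = add_mset x B'" "M = A + B'"
proof (cases "x \<in># A")
  case True
  then obtain A' where "A = add_mset x A'" by (blast dest: multi_member_split)
  with assms that(1) show ?thesis by simp
next
  case False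
  with assms have "x \<in># B" by (metis union_iff union_single_eq_member)
  then obtain B' where "B = add_mset x B'" by (blast dest: multi_member_split)
  with assms that(2) show ?thesis by simp
qed

lemma mder_split:
  "mder \<Delta> m e t (A + B) \<Longrightarrow> \<exists>\<Delta>\<^sub>1 \<Delta>\<^sub>2 m\<^sub>1 m\<^sub>2 e\<^sub>1 e\<^sub>2. mder \<Delta>\<^sub>1 m\<^sub>1 e\<^sub>1 t A \<and> mder \<Delta>\<^sub>2 m\<^sub>2 e\<^sub>2 t B
     \<and> \<Delta> = ctx_sum \<Delta>\<^sub>1 \<Delta>\<^sub>2 \<and> m = m\<^sub>1 + m\<^sub>2 \<and> e = e\<^sub>1 + e\<^sub>2"
proof (induction \<Delta> m e t "A + B" arbitrary: A B
    rule: lder_mder.inducts(2)[where ?P1.0 = "\<lambda>_ _ _ _ _. True"])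
  case (many_empty t)
  then show ?case by (auto intro!: exI[of _ empty_ctx] lder_mder.many_empty)
next
  case (many_add \<Gamma> m e t L \<Delta> m' e' M)
  from \<open>add_mset L M = A + B\<close> show ?case
  proof (cases rule: add_mset_eq_plusE)
    case (1 A')
    with many_add.hyps(4) obtain \<Delta>\<^sub>1 \<Delta>\<^sub>2 m\<^sub>1 m\<^sub>2 e\<^sub>1 e\<^sub>2 where
      IH: "mder \<Delta>\<^sub>1 m\<^sub>1 e\<^sub>1 t A'" "mder \<Delta>\<^sub>2 m\<^sub>2 e\<^sub>2 t B" "\<Delta> = ctx_sum \<Delta>\<^sub>1 \<Delta>\<^sub>2"
        "m' = m\<^sub>1 + m\<^sub>2" "e' = e\<^sub>1 + e\<^sub>2"
      by blast
    have "mder (ctx_sum \<Gamma> \<Delta>\<^sub>1) (m + m\<^sub>1) (e + e\<^sub>1) t A"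
      using lder_mder.many_add[OF many_add.hyps(1) IH(1)] 1 by simp
    moreover have "ctx_sum \<Gamma> \<Delta> = ctx_sum (ctx_sum \<Gamma> \<Delta>\<^sub>1) \<Delta>\<^sub>2"
      "m + m' = (m + m\<^sub>1) + m\<^sub>2" "e + e' = (e + e\<^sub>1) + e\<^sub>2"
      using IH by (simp_all add: ctx_sum_assoc)
    ultimately show ?thesis using IH(2) by blast
  next
    case (2 B')
    with many_add.hyps(4) obtain \<Delta>\<^sub>1 \<Delta>\<^sub>2 m\<^sub>1 m\<^sub>2 e\<^sub>1 e\<^sub>2 where
      IH: "mder \<Delta>\<^sub>1 m\<^sub>1 e\<^sub>1 t A" "mder \<Delta>\<^sub>2 m\<^sub>2 e\<^sub>2 t B'" "\<Delta> = ctx_sum \<Delta>\<^sub>1 \<Delta>\<^sub>2"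
        "m' = m\<^sub>1 + m\<^sub>2" "e' = e\<^sub>1 + e\<^sub>2"
      by blast
    have "mder (ctx_sum \<Gamma> \<Delta>\<^sub>2) (m + m\<^sub>2) (e + e\<^sub>2) t B"
      using lder_mder.many_add[OF many_add.hyps(1) IH(2)] 2 by simp
    moreover have "ctx_sum \<Gamma> \<Delta> = ctx_sum \<Delta>\<^sub>1 (ctx_sum \<Gamma> \<Delta>\<^sub>2)"
      "m + m' = m\<^sub>1 + (m + m\<^sub>2)" "e + e' = e\<^sub>1 + (e + e\<^sub>2)"
      using IH by (simp_all add: ctx_sum_left_commute)
    ultimately show ?thesis using IH(1) by blast
  qed
qed simp_all

inductive_cases mder_emptyE: "mder \<Delta> m e t {#}"
inductive_cases mder_add_msetE: "mder \<Delta> m e t (add_mset L M)"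
inductive_cases lder_VarE: "lder \<Gamma> m e (Var x) L"
inductive_cases lder_Abs_ArrE: "lder \<Gamma> m e (Abs t) (Arr M L)"
inductive_cases lder_AppE: "lder \<Gamma> m e (App t u) L"

lemma mder_emptyD: "mder \<Delta> m e t {#} \<Longrightarrow> \<Delta> = empty_ctx \<and> m = 0 \<and> e = 0"
  by (erule mder_emptyE) simp

lemma mder_singleton_iff: "mder \<Delta> m e t {#L#} \<longleftrightarrow> lder \<Delta> m e t L"
proof
  assume "mder \<Delta> m e t {#L#}"
  then show "lder \<Delta> m e t L" by (rule mder_add_msetE) (auto dest: mder_emptyD)
next
  assume "lder \<Delta> m e t L"
  from lder_mder.many_add[OF this lder_mder.many_empty] show "mder \<Delta> m e t {#L#}" by simp
qed

lemma mder_empty_ctx_plusD: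
  "mder empty_ctx m e t (A + B) \<Longrightarrow>
     \<exists>m\<^sub>1 e\<^sub>1 m\<^sub>2 e\<^sub>2. mder empty_ctx m\<^sub>1 e\<^sub>1 t A \<and> mder empty_ctx m\<^sub>2 e\<^sub>2 t B \<and> m = m\<^sub>1 + m\<^sub>2 \<and> e = e\<^sub>1 + e\<^sub>2"
  by (drule mder_split) (metis ctx_sum_eq_empty_iff)

lemma mder_empty_ctx_add_msetD:
  "mder empty_ctx m e t (add_mset L M) \<Longrightarrow>
     \<exists>m\<^sub>1 e\<^sub>1 m\<^sub>2 e\<^sub>2. lder empty_ctx m\<^sub>1 e\<^sub>1 t L \<and> mder empty_ctx m\<^sub>2 e\<^sub>2 t M \<and> m = m\<^sub>1 + m\<^sub>2 \<and> e = e\<^sub>1 + e\<^sub>2"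
  using mder_empty_ctx_plusD[of m e t "{#L#}" M] by (simp add: mder_singleton_iff)

lemma lder_empty_ctx_Var: "\<not> lder empty_ctx m e (Var x) L"
proof
  assume "lder empty_ctx m e (Var x) L"
  then have "empty_ctx x = (empty_ctx(x := {#L#})) x" by (rule lder_VarE) simp
  then show False by (simp add: empty_ctx_def)
qed

lemma lder_empty_ctx_AppE:
  assumes "lder empty_ctx m e (App t u) L"
  obtains m\<^sub>1 e\<^sub>1 M m\<^sub>2 e\<^sub>2 where "lder empty_ctx m\<^sub>1 e\<^sub>1 t (Arr M L)"
    "mder empty_ctx m\<^sub>2 e\<^sub>2 u (add_mset N M)" "m = m\<^sub>1 + m\<^sub>2 + 1"
  using assms by (rule lder_AppE) (metis that ctx_sum_eq_empty_iff Suc_eq_plus1)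

lemma closed_at_mono: "closed_at j t \<Longrightarrow> j \<le> k \<Longrightarrow> closed_at k t"
  by (induction j t arbitrary: k rule: closed_at.induct) auto

lemma lift_closed_at: "closed_at j t \<Longrightarrow> j \<le> k \<Longrightarrow> lift k t = t"
  by (induction j t arbitrary: k rule: closed_at.induct) auto

lemma lift_closed: "closed t \<Longrightarrow> lift k t = t"
  unfolding closed_def by (simp add: lift_closed_at)

lemma closed_at_subst:
  "closed_at (Suc n) t \<Longrightarrow> closed s \<Longrightarrow> k \<le> n \<Longrightarrow> closed_at n (subst t k s)"
  by (induction t arbitrary: n k)
    (auto simp: lift_closed closed_def intro: closed_at_mono[of 0 s])

lemma betav_closed: "betav t t' \<Longrightarrow> closed t \<Longrightarrow> closed t'"
  by (induction rule: betav.induct) (auto intro: closed_at_subst simp: closed_def)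

definition ctx_remove :: "nat \<Rightarrow> ctx \<Rightarrow> ctx" where
  "ctx_remove k \<Gamma> = (\<lambda>x. if x < k then \<Gamma> x else \<Gamma> (Suc x))"

lemma ctx_remove_empty [simp]: "ctx_remove k empty_ctx = empty_ctx"
  by (simp add: ctx_remove_def empty_ctx_def)

lemma ctx_remove_sum: "ctx_remove k (ctx_sum \<Gamma> \<Delta>) = ctx_sum (ctx_remove k \<Gamma>) (ctx_remove k \<Delta>)"
  by (simp add: ctx_remove_def ctx_sum_def fun_eq_iff)

lemma ctx_remove_0: "ctx_remove 0 \<Gamma> = (\<lambda>x. \<Gamma> (Suc x))"
  by (simp add: ctx_remove_def)

lemma ctx_remove_Suc_tail: "(\<lambda>x. ctx_remove (Suc k) \<Gamma> (Suc x)) = ctx_remove k (\<lambda>x. \<Gamma> (Suc x))"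
  by (simp add: ctx_remove_def fun_eq_iff)

lemma ctx_remove_same_singleton: "ctx_remove k (empty_ctx(k := M)) = empty_ctx"
  by (simp add: ctx_remove_def empty_ctx_def fun_eq_iff)

lemma ctx_remove_other_singleton:
  "x \<noteq> k \<Longrightarrow> ctx_remove k (empty_ctx(x := M)) = empty_ctx((if k < x then x - 1 else x) := M)"
  by (auto simp: ctx_remove_def empty_ctx_def fun_eq_iff)

lemma lder_mder_subst:
  shows "lder \<Gamma> m e t L \<Longrightarrow> closed s \<Longrightarrow> mder empty_ctx m\<^sub>s e\<^sub>s s (\<Gamma> k) \<Longrightarrow>
      \<exists>e'. lder (ctx_remove k \<Gamma>) (m + m\<^sub>s) e' (subst t k s) L"
    and "mder \<Gamma> m e t M \<Longrightarrow> closed s \<Longrightarrow> mder empty_ctx m\<^sub>s e\<^sub>s s (\<Gamma> k) \<Longrightarrow>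
      \<exists>e'. mder (ctx_remove k \<Gamma>) (m + m\<^sub>s) e' (subst t k s) M"
proof (induction arbitrary: k m\<^sub>s e\<^sub>s and k m\<^sub>s e\<^sub>s rule: lder_mder.inducts)
  case (ax x L)
  show ?case
  proof (cases "x = k")
    case True
    with ax.prems(2) have "lder empty_ctx m\<^sub>s e\<^sub>s s L" by (simp add: mder_singleton_iff)
    moreover have "ctx_remove k (empty_ctx(x := {#L#})) = empty_ctx" "subst (Var x) k s = s"
      using True by (simp_all add: ctx_remove_same_singleton)
    ultimately show ?thesis by (metis add_0)
  next
    case False
    with ax.prems(2) have "m\<^sub>s = 0" by (auto simp: empty_ctx_def dest: mder_emptyD)
    moreover define x' where "x' = (if k < x then x - 1 else x)"
    with False have "ctx_remove k (empty_ctx(x := {#L#})) = empty_ctx(x' := {#L#})"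
      "subst (Var x) k s = Var x'"
      by (simp_all add: ctx_remove_other_singleton)
    ultimately show ?thesis by (metis add_0 lder_mder.ax)
  qed
next
  case (ax_lam t)
  then have "m\<^sub>s = 0" by (auto simp: empty_ctx_def dest: mder_emptyD)
  then show ?case by (auto intro: lder_mder.ax_lam)
next
  case (lam \<Gamma> m e t L)
  from lam.IH[OF lam.prems(1), where k = "Suc k"] lam.prems(2) obtain e' where
    "lder (ctx_remove (Suc k) \<Gamma>) (m + m\<^sub>s) e' (subst t (Suc k) s) L"
    by auto
  from lder_mder.lam[OF this] show ?case
    using lam.prems(1) by (auto simp: ctx_remove_Suc_tail ctx_remove_def lift_closed)
next
  case (app \<Gamma> m e t M L \<Delta> m' e' u)
  from app.prems(2) obtain m\<^sub>1 e\<^sub>1 m\<^sub>2 e\<^sub>2 where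
    "mder empty_ctx m\<^sub>1 e\<^sub>1 s (\<Gamma> k)" "mder empty_ctx m\<^sub>2 e\<^sub>2 s (\<Delta> k)" "m\<^sub>s = m\<^sub>1 + m\<^sub>2"
    by (auto simp: ctx_sum_def dest: mder_empty_ctx_plusD)
  with app.IH app.prems(1) obtain f\<^sub>1 f\<^sub>2 where
    "lder (ctx_remove k \<Gamma>) (m + m\<^sub>1) f\<^sub>1 (subst t k s) (Arr M L)"
    "mder (ctx_remove k \<Delta>) (m' + m\<^sub>2) f\<^sub>2 (subst u k s) (M + {#N#})"
    by blast
  from lder_mder.app[OF this] show ?case
    using \<open>m\<^sub>s = m\<^sub>1 + m\<^sub>2\<close> by (auto simp: ctx_remove_sum ac_simps)
next
  case (many_empty t)
  then have "m\<^sub>s = 0" by (auto simp: empty_ctx_def dest: mder_emptyD)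
  then show ?case by (auto intro: lder_mder.many_empty)
next
  case (many_add \<Gamma> m e t L \<Delta> m' e' M)
  from many_add.prems(2) obtain m\<^sub>1 e\<^sub>1 m\<^sub>2 e\<^sub>2 where
    "mder empty_ctx m\<^sub>1 e\<^sub>1 s (\<Gamma> k)" "mder empty_ctx m\<^sub>2 e\<^sub>2 s (\<Delta> k)" "m\<^sub>s = m\<^sub>1 + m\<^sub>2"
    by (auto simp: ctx_sum_def dest: mder_empty_ctx_plusD)
  with many_add.IH many_add.prems(1) obtain f\<^sub>1 f\<^sub>2 where
    "lder (ctx_remove k \<Gamma>) (m + m\<^sub>1) f\<^sub>1 (subst t k s) L"
    "mder (ctx_remove k \<Delta>) (m' + m\<^sub>2) f\<^sub>2 (subst t k s) M"
    by blast
  from lder_mder.many_add[OF this] show ?case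
    using \<open>m\<^sub>s = m\<^sub>1 + m\<^sub>2\<close> by (auto simp: ctx_remove_sum ac_simps)
qed

lemma lder_subject_reduction_root:
  assumes "closed v" and "lder empty_ctx m e (App (Abs t) v) L"
  shows "\<exists>m' e'. m' < m \<and> lder empty_ctx m' e' (subst t 0 v) L"
proof -
  from assms(2) obtain m\<^sub>1 e\<^sub>1 M m\<^sub>2 e\<^sub>2 where head: "lder empty_ctx m\<^sub>1 e\<^sub>1 (Abs t) (Arr M L)"
    and arg: "mder empty_ctx m\<^sub>2 e\<^sub>2 v (add_mset N M)" and m: "m = m\<^sub>1 + m\<^sub>2 + 1"
    by (rule lder_empty_ctx_AppE)
  from head obtain \<Gamma> where body: "lder \<Gamma> m\<^sub>1 e\<^sub>1 t L" "ctx_remove 0 \<Gamma> = empty_ctx" "\<Gamma> 0 = M"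
    by (rule lder_Abs_ArrE) (auto simp: ctx_remove_0)
  from arg obtain m\<^sub>a e\<^sub>a where "mder empty_ctx m\<^sub>a e\<^sub>a v M" "m\<^sub>a \<le> m\<^sub>2"
    using mder_empty_ctx_plusD[of m\<^sub>2 e\<^sub>2 v M "{#N#}"] by auto
  with body assms(1) obtain e' where "lder empty_ctx (m\<^sub>1 + m\<^sub>a) e' (subst t 0 v) L"
    using lder_mder_subst(1) by metis
  moreover have "m\<^sub>1 + m\<^sub>a < m" using m \<open>m\<^sub>a \<le> m\<^sub>2\<close> by simp
  ultimately show ?thesis by blast
qed

lemma mder_subject_reduction:
  assumes "\<And>m e L. lder empty_ctx m e u L \<Longrightarrow> \<exists>m' e'. m' < m \<and> lder empty_ctx m' e' u' L"
  shows "mder empty_ctx m e u M \<Longrightarrow> \<exists>m' e'. m' + size M \<le> m \<and> mder empty_ctx m' e' u' M"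
proof (induction M arbitrary: m e)
  case empty
  then show ?case by (auto intro: lder_mder.many_empty)
next
  case (add L M)
  then obtain m\<^sub>1 e\<^sub>1 m\<^sub>2 e\<^sub>2 where "lder empty_ctx m\<^sub>1 e\<^sub>1 u L" "mder empty_ctx m\<^sub>2 e\<^sub>2 u M"
    "m = m\<^sub>1 + m\<^sub>2"
    by (blast dest: mder_empty_ctx_add_msetD)
  with assms add.IH obtain m\<^sub>1' e\<^sub>1' m\<^sub>2' e\<^sub>2' where "m\<^sub>1' < m\<^sub>1" "lder empty_ctx m\<^sub>1' e\<^sub>1' u' L"
    "m\<^sub>2' + size M \<le> m\<^sub>2" "mder empty_ctx m\<^sub>2' e\<^sub>2' u' M"
    by meson
  with lder_mder.many_add[of empty_ctx m\<^sub>1' e\<^sub>1' u' L empty_ctx m\<^sub>2' e\<^sub>2' M] \<open>m = m\<^sub>1 + m\<^sub>2\<close>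
  show ?case by (intro exI[of _ "m\<^sub>1' + m\<^sub>2'"] exI[of _ "e\<^sub>1' + e\<^sub>2'"]) auto
qed

lemma lder_subject_reduction:
  "betav t t' \<Longrightarrow> closed t \<Longrightarrow> lder empty_ctx m e t L \<Longrightarrow> \<exists>m' e'. m' < m \<and> lder empty_ctx m' e' t' L"
proof (induction arbitrary: m e L rule: betav.induct)
  case (root v t)
  from root.prems(1) have "closed v" by (simp add: closed_def)
  then show ?case using root.prems(2) by (rule lder_subject_reduction_root)
next
  case (appL t t' u)
  from appL.prems(2) obtain m\<^sub>1 e\<^sub>1 M m\<^sub>2 e\<^sub>2 where "lder empty_ctx m\<^sub>1 e\<^sub>1 t (Arr M L)"
    and arg: "mder empty_ctx m\<^sub>2 e\<^sub>2 u (add_mset N M)" and "m = m\<^sub>1 + m\<^sub>2 + 1"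
    by (rule lder_empty_ctx_AppE)
  with appL.IH appL.prems(1) obtain m\<^sub>1' e\<^sub>1' where "m\<^sub>1' < m\<^sub>1" "lder empty_ctx m\<^sub>1' e\<^sub>1' t' (Arr M L)"
    by (fastforce simp: closed_def)
  from lder_mder.app[OF this(2), of empty_ctx m\<^sub>2 e\<^sub>2 u] arg \<open>m\<^sub>1' < m\<^sub>1\<close> \<open>m = m\<^sub>1 + m\<^sub>2 + 1\<close>
  show ?case by (intro exI[of _ "m\<^sub>1' + m\<^sub>2 + 1"] exI[of _ "e\<^sub>1' + e\<^sub>2"]) auto
next
  case (appR u u' t)
  from appR.prems(2) obtain m\<^sub>1 e\<^sub>1 M m\<^sub>2 e\<^sub>2 where head: "lder empty_ctx m\<^sub>1 e\<^sub>1 t (Arr M L)"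
    and "mder empty_ctx m\<^sub>2 e\<^sub>2 u (add_mset N M)" and "m = m\<^sub>1 + m\<^sub>2 + 1"
    by (rule lder_empty_ctx_AppE)
  with appR.IH appR.prems(1) obtain m\<^sub>2' e\<^sub>2' where
    "m\<^sub>2' + size (add_mset N M) \<le> m\<^sub>2" "mder empty_ctx m\<^sub>2' e\<^sub>2' u' (add_mset N M)"
    using mder_subject_reduction[of u u'] by (fastforce simp: closed_def)
  from lder_mder.app[OF head, of empty_ctx m\<^sub>2' e\<^sub>2' u'] this \<open>m = m\<^sub>1 + m\<^sub>2 + 1\<close>
  show ?case by (intro exI[of _ "m\<^sub>1 + m\<^sub>2' + 1"] exI[of _ "e\<^sub>1 + e\<^sub>2'"]) auto
qed

lemma lder_progress: "lder empty_ctx m e t L \<Longrightarrow> \<not> is_val t \<Longrightarrow> \<exists>t'. betav t t'"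
proof (induction t arbitrary: m e L)
  case (Var x)
  then show ?case by (simp add: lder_empty_ctx_Var)
next
  case (Abs t)
  then show ?case by simp
next
  case (App t u)
  from App.prems(1) obtain m\<^sub>1 e\<^sub>1 M m\<^sub>2 e\<^sub>2 where head: "lder empty_ctx m\<^sub>1 e\<^sub>1 t (Arr M L)"
    and arg: "mder empty_ctx m\<^sub>2 e\<^sub>2 u (add_mset N M)"
    by (rule lder_empty_ctx_AppE)
  show ?case
  proof (cases "is_val t")
    case False
    with App.IH(1) head show ?thesis by (blast intro: betav.appL)
  next
    case True
    then obtain b where "t = Abs b" by (cases t) auto
    moreover from arg obtain m' e' where "lder empty_ctx m' e' u N"
      by (blast dest: mder_empty_ctx_add_msetD)
    ultimately show ?thesis using App.IH(2) by (cases "is_val u") (blast intro: betav.intros)+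
  qed
qed

theorem theorem7p2:
  assumes "closed t"
    and "lder empty_ctx m e t L"
  shows "\<exists>v n. is_val v \<and> (betav ^^ n) t v \<and> n \<le> m"
  using assms
proof (induction m arbitrary: t e rule: less_induct)
  case (less m)
  show ?case
  proof (cases "is_val t")
    case True
    then show ?thesis by (intro exI[of _ t] exI[of _ 0]) auto
  next
    case False
    with less.prems obtain t' where step: "betav t t'" by (blast dest: lder_progress)
    with less.prems obtain m' e' where "m' < m" "lder empty_ctx m' e' t' L"
      by (blast dest: lder_subject_reduction)
    with less.IH step less.prems(1) obtain v n where "is_val v" "(betav ^^ n) t' v" "n \<le> m'"
      by (meson betav_closed)
    moreover from step \<open>(betav ^^ n) t' v\<close> have "(betav ^^ Suc n) t v"
      by (rule relpowp_Suc_I2)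
    ultimately show ?thesis using \<open>m' < m\<close> by (meson Suc_le_eq le_less_trans)
  qed
qed

end
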